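(* Let $\mathbb S=\bigwedge(\bar\theta_1,\bar\theta_2)$ be the simple $\mathcal C$-module, on which $\bar\theta_a$ acts by (left exterior) multiplication and $\theta_a$ acts as the odd derivation with $\theta_a(\bar\theta_b)=\delta_{ab}$, $\theta_a(1)=0$. Restricted to $\tilde W\subset\mathcal C^\times$, $\mathbb S$ is an irreducible spin representation of $\tilde W$ isomorphic to $U(1,1)$.
   Context: Fix integers $m_1,m_2\ge2$ and set $\zeta_a=e^{i\pi/m_a}$. Let $x_1,\dots,x_4$ be the standard orthonormal basis of $\mathbb R^4$ (complexified to $V=\mathbb C^4$). Let $\mathcal C$ be the complex Clifford algebra generated by $e_1,\dots,e_4$ with $e_je_k+e_ke_j=2\delta_{jk}$, and $\gamma:V\to\mathcal C$ the linear map with $\gamma(x_j)=e_j$. Put $\theta_a=\frac12(e_{2a-1}+ie_{2a})$ and $\bar\theta_a=\frac12(e_{2a-1}-ie_{2a})$ for $a=1,2$. Let $\alpha_p=(\sin(p\pi/m_1),-\cos(p\pi/m_1),0,0)$ ($p=1,\dots,2m_1$), $\beta_q=(0,0,\sin(q\pi/m_2),-\cos(q\pi/m_2))$ ($q=1,\dots,2m_2$), and let $\tilde W\subset\mathcal C^\times$ be the group generated by all $\gamma(\alpha_p),\gamma(\beta_q)$ (the positive double cover of $W=D_{2m_1}\times D_{2m_2}$); it contains $z:=-1$. A representation of $\tilde W$ is spin if $z$ acts by $-1$. Set $\tilde f_1=\gamma(\alpha_{m_1})$, $\tilde f_2=\gamma(\beta_{m_2})$, $\tilde r_1=z\gamma(\alpha_{m_1})\gamma(\alpha_1)$,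 $\tilde r_2=z\gamma(\beta_{m_2})\gamma(\beta_1)$; these together with $z$ generate $\tilde W$. $U(1,1)$ denotes the four-dimensional spin representation of $\tilde W$ with basis $u_1,u_2,u_3,u_4$ on which, in matrix form with respect to this basis, $\tilde f_1=\begin{pmatrix}0&1&0&0\\1&0&0&0\\0&0&0&1\\0&0&1&0\end{pmatrix}$, $\tilde f_2=\begin{pmatrix}0&0&1&0\\0&0&0&-1\\1&0&0&0\\0&-1&0&0\end{pmatrix}$, $\tilde r_1=\mathrm{diag}(\zeta_1,\zeta_1^{-1},\zeta_1,\zeta_1^{-1})$, $\tilde r_2=\mathrm{diag}(\zeta_2,\zeta_2,\zeta_2^{-1},\zeta_2^{-1})$, and $z=-1$. *)

theory Defs
  imports Complex_Main "Jordan_Normal_Form.Matrix"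
begin

text \<open>Elements of the Clifford algebra are coefficient functions on the basis
 e_A (A a subset of {1..4}), e_A = e_a1 e_a2 ... e_ak with a1 < ... < ak.
 Coefficients at sets that are not subsets of {1..4} are irrelevant (and are 0
 for all elements built below).\<close>

type_synonym cliff = "nat set \<Rightarrow> complex"

definition cl_sign :: "nat set \<Rightarrow> nat set \<Rightarrow> complex" where
  "cl_sign A B = (-1) ^ card {(a,b). a \<in> A \<and> b \<in> B \<and> b < a}"

definition cmul :: "cliff \<Rightarrow> cliff \<Rightarrow> cliff" where
  "cmul x y = (\<lambda>C. \<Sum>A\<in>Pow {1..4::nat}. \<Sum>B\<in>Pow {1..4::nat}.
      (if (A - B) \<union> (B - A) = C then cl_sign A B * x A * y B else 0))"

definition cone :: cliff where
  "cone = (\<lambda>A. if A = {} then 1 else 0)"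

definition cneg :: "cliff \<Rightarrow> cliff" where
  "cneg x = (\<lambda>A. - x A)"

text \<open>gamma : V = C^4 \<rightarrow> C, x_j \<mapsto> e_j (vectors are functions on {1..4}).\<close>
definition gamma :: "(nat \<Rightarrow> complex) \<Rightarrow> cliff" where
  "gamma v = (\<lambda>A. if A \<subseteq> {1..4} \<and> card A = 1 then v (the_elem A) else 0)"

definition alpha :: "nat \<Rightarrow> nat \<Rightarrow> nat \<Rightarrow> complex" where
  "alpha m1 p = (\<lambda>j. if j = 1 then complex_of_real (sin (real p * pi / real m1))
                 else if j = 2 then complex_of_real (- cos (real p * pi / real m1)) else 0)"

definition beta :: "nat \<Rightarrow> nat \<Rightarrow> nat \<Rightarrow> complex" where
  "beta m2 q = (\<lambda>j. if j = 3 then complex_of_real (sin (real q * pi / real m2))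
                 else if j = 4 then complex_of_real (- cos (real q * pi / real m2)) else 0)"

definition Wgens :: "nat \<Rightarrow> nat \<Rightarrow> cliff set" where
  "Wgens m1 m2 = {gamma (alpha m1 p) | p. 1 \<le> p \<and> p \<le> 2 * m1}
               \<union> {gamma (beta m2 q) | q. 1 \<le> q \<and> q \<le> 2 * m2}"

text \<open>The subgroup of C^\<times> generated by the gamma(alpha_p), gamma(beta_q).
  Each generator is an involution (unit vectors square to 1), so the generated
  group equals the generated monoid.\<close>
inductive_set Wt :: "nat \<Rightarrow> nat \<Rightarrow> cliff set" for m1 m2 where
  Wt_one: "cone \<in> Wt m1 m2"
| Wt_mul: "g \<in> Wgens m1 m2 \<Longrightarrow> x \<in> Wt m1 m2 \<Longrightarrow> cmul g x \<in> Wt m1 m2"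

definition cz :: cliff where "cz = cneg cone"

definition tf1 :: "nat \<Rightarrow> cliff" where "tf1 m1 = gamma (alpha m1 m1)"
definition tf2 :: "nat \<Rightarrow> cliff" where "tf2 m2 = gamma (beta m2 m2)"
definition tr1 :: "nat \<Rightarrow> cliff" where
  "tr1 m1 = cmul cz (cmul (gamma (alpha m1 m1)) (gamma (alpha m1 1)))"
definition tr2 :: "nat \<Rightarrow> cliff" where
  "tr2 m2 = cmul cz (cmul (gamma (beta m2 m2)) (gamma (beta m2 1)))"

text \<open>Basis of S indexed by 0..3: index i corresponds to the subset
  sub i of {1,2} (bit 0 \<leftrightarrow> 1, bit 1 \<leftrightarrow> 2), i.e. 0 = 1, 1 = thetabar_1,
  2 = thetabar_2, 3 = thetabar_1 thetabar_2.\<close>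
definition sub :: "nat \<Rightarrow> nat set" where
  "sub i = {a \<in> {1,2}. odd (i div 2 ^ (a - 1))}"

definition thetabar_mat :: "nat \<Rightarrow> complex mat" where
  "thetabar_mat a = mat 4 4 (\<lambda>(i,j). if a \<notin> sub j \<and> sub i = insert a (sub j)
      then (-1) ^ card {b \<in> sub j. b < a} else 0)"

definition theta_mat :: "nat \<Rightarrow> complex mat" where
  "theta_mat a = mat 4 4 (\<lambda>(i,j). if a \<in> sub j \<and> sub i = sub j - {a}
      then (-1) ^ card {b \<in> sub j. b < a} else 0)"

text \<open>Action of e_j: e_(2a-1) = theta_a + thetabar_a, e_(2a) = -i (theta_a - thetabar_a).\<close>
definition e_mat :: "nat \<Rightarrow> complex mat" where
  "e_mat j = (if odd j then theta_mat ((j + 1) div 2) + thetabar_mat ((j + 1) div 2)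
              else (- \<i>) \<cdot>\<^sub>m (theta_mat (j div 2) - thetabar_mat (j div 2)))"

definition eA_mat :: "nat set \<Rightarrow> complex mat" where
  "eA_mat A = foldr (\<lambda>j M. e_mat j * M) (sorted_list_of_set A) (1\<^sub>m 4)"

definition rhoS :: "cliff \<Rightarrow> complex mat" where
  "rhoS x = mat 4 4 (\<lambda>(i,j). \<Sum>A\<in>Pow {1..4::nat}. x A * (eA_mat A $$ (i,j)))"

definition zeta :: "nat \<Rightarrow> complex" where "zeta m = cis (pi / real m)"

definition U_f1 :: "complex mat" where
  "U_f1 = mat_of_rows_list 4 [[0,1,0,0],[1,0,0,0],[0,0,0,1],[0,0,1,0]]"
definition U_f2 :: "complex mat" where
  "U_f2 = mat_of_rows_list 4 [[0,0,1,0],[0,0,0,-1],[1,0,0,0],[0,-1,0,0]]"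
definition U_r1 :: "nat \<Rightarrow> complex mat" where
  "U_r1 m1 = mat_of_rows_list 4 [[zeta m1,0,0,0],[0,inverse (zeta m1),0,0],
                                  [0,0,zeta m1,0],[0,0,0,inverse (zeta m1)]]"
definition U_r2 :: "nat \<Rightarrow> complex mat" where
  "U_r2 m2 = mat_of_rows_list 4 [[zeta m2,0,0,0],[0,zeta m2,0,0],
                                  [0,0,inverse (zeta m2),0],[0,0,0,inverse (zeta m2)]]"
definition U_z :: "complex mat" where "U_z = - 1\<^sub>m 4"

definition irreducible_on :: "complex mat set \<Rightarrow> bool" where
  "irreducible_on G \<longleftrightarrow> (\<forall>V. V \<subseteq> carrier_vec 4 \<and> 0\<^sub>v 4 \<in> V
      \<and> (\<forall>v\<in>V. \<forall>w\<in>V. v + w \<in> V) \<and> (\<forall>c. \<forall>v\<in>V. c \<cdot>\<^sub>v v \<in> V)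
      \<and> (\<forall>M\<in>G. \<forall>v\<in>V. M *\<^sub>v v \<in> V)
      \<longrightarrow> V = {0\<^sub>v 4} \<or> V = carrier_vec 4)"

end

theory Submission
  imports Defs
begin

text \<open>
  Already as a module over the Clifford algebra, S is irreducible: suitable products of the
  theta_a and thetabar_a carry any nonzero spinor to a nonzero multiple of 1, and the raising
  operators thetabar_a then produce the whole basis. Since sin(pi/m) is nonzero, alpha_1 and
  alpha_m1 (resp. beta_1 and beta_m2) span the first (resp. second) coordinate plane, so every
  theta_a and thetabar_a is a linear combination of two elements of the double cover acting on S,
  and a subspace stable under the group is stable under the Clifford algebra. The Clifford
  relations make the action multiplicative on products of two vectors, so the generators act by
  explicit 4 x 4 matrices: r_a and z act by exactly the diagonal matrices of U(1,1), and a
  diagonal change of basis intertwines the actions of f_a.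
\<close>

lemma all_less_4: "(\<forall>i<(4::nat). P i) \<longleftrightarrow> P 0 \<and> P 1 \<and> P 2 \<and> P 3"
  by (auto simp: less_Suc_eq numeral_eq_Suc)

lemma sum_upt_4: "(\<Sum>k = 0..<4::nat. f k) = f 0 + f 1 + f 2 + f 3"
  by (simp add: numeral_eq_Suc add.assoc)

lemma sum_1_to_4: "(\<Sum>a\<in>{1..4::nat}. f a) = f 1 + f 2 + f 3 + f 4"
  by (simp add: numeral_eq_Suc add.assoc)

lemma mem_1_to_4: "(a::nat) \<in> {1..4} \<longleftrightarrow> a = 1 \<or> a = 2 \<or> a = 3 \<or> a = 4"
  by (simp add: atLeastAtMost_iff) presburger

lemma mat_of_rows_list_dims [simp]:
  "dim_row (mat_of_rows_list n L) = length L" "dim_col (mat_of_rows_list n L) = n"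
  by (simp_all add: mat_of_rows_list_def)

lemma mat_of_rows_list_index [simp]:
  "i < length L \<Longrightarrow> j < n \<Longrightarrow> mat_of_rows_list n L $$ (i, j) = L ! i ! j"
  by (simp add: mat_of_rows_list_def)

lemma mat_of_rows_list_carrier [simp]:
  "length L = m \<Longrightarrow> mat_of_rows_list n L \<in> carrier_mat m n"
  unfolding mat_of_rows_list_def by (simp only: mat_carrier)

lemma eq_mat_4I:
  assumes "dim_row A = 4" "dim_col A = 4" "dim_row B = 4" "dim_col B = 4"
    and "\<forall>i<4. \<forall>j<4. A $$ (i, j) = B $$ (i, j)"
  shows "A = B"
  using assms by (intro eq_matI) auto

lemma index_mult_mat_4:
  assumes "dim_row A = 4" "dim_col A = 4" "dim_row B = 4" "dim_col B = 4" "i < 4" "j < 4"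
  shows "(A * B) $$ (i, j) = (\<Sum>k<4. A $$ (i, k) * B $$ (k, j))"
  using assms by (auto simp: scalar_prod_def atLeast0LessThan intro!: sum.cong)

lemmas entrywise_4 = all_less_4 scalar_prod_def sum_upt_4

definition vec4 :: "complex \<Rightarrow> complex \<Rightarrow> complex \<Rightarrow> complex \<Rightarrow> complex vec" where
  "vec4 a b c d = vec 4 (\<lambda>i. [a, b, c, d] ! i)"

lemma vec4_eqI: "x \<in> carrier_vec 4 \<Longrightarrow> y \<in> carrier_vec 4 \<Longrightarrow> (\<forall>i<4. x $ i = y $ i) \<Longrightarrow> x = y"
  by (rule eq_vecI) auto

lemma vec4_carrier [simp]: "vec4 a b c d \<in> carrier_vec 4"
  by (simp add: vec4_def)

lemma vec4_index [simp]:
  "vec4 a b c d $ 0 = a" "vec4 a b c d $ 1 = b" "vec4 a b c d $ 2 = c" "vec4 a b c d $ 3 = d"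
  by (simp_all add: vec4_def)

lemma vec4_eta: "x \<in> carrier_vec 4 \<Longrightarrow> x = vec4 (x $ 0) (x $ 1) (x $ 2) (x $ 3)"
  by (rule vec4_eqI) (simp_all add: vec4_def all_less_4)

lemma vec4_zero: "0\<^sub>v 4 = vec4 0 0 0 0"
  by (rule vec4_eqI) (simp_all add: vec4_def all_less_4)

lemma vec4_add: "vec4 a b c d + vec4 a' b' c' d' = vec4 (a + a') (b + b') (c + c') (d + d')"
  by (rule vec4_eqI) (simp_all add: vec4_def all_less_4)

lemma vec4_smult: "k \<cdot>\<^sub>v vec4 a b c d = vec4 (k * a) (k * b) (k * c) (k * d)"
  by (rule vec4_eqI) (simp_all add: vec4_def all_less_4)

lemma mat_of_rows_list_mult_vec4:
  assumes "length L = 4"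
  shows "mat_of_rows_list 4 L *\<^sub>v vec4 a b c d = vec4
     (L!0!0 * a + L!0!1 * b + L!0!2 * c + L!0!3 * d) (L!1!0 * a + L!1!1 * b + L!1!2 * c + L!1!3 * d)
     (L!2!0 * a + L!2!1 * b + L!2!2 * c + L!2!3 * d) (L!3!0 * a + L!3!1 * b + L!3!2 * c + L!3!3 * d)"
  using assms
  by (intro vec4_eqI mult_mat_vec_carrier[OF mat_of_rows_list_carrier[OF assms]])
    (simp_all add: vec4_def entrywise_4)

lemma sum_Pow_singletons:
  assumes "finite S" and "\<And>A. A \<subseteq> S \<Longrightarrow> card A \<noteq> 1 \<Longrightarrow> f A = 0"
  shows "(\<Sum>A\<in>Pow S. f A) = (\<Sum>a\<in>S. f {a})"
proof -
  have "f A = 0" if "A \<in> Pow S - (\<lambda>a. {a}) ` S" for A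
  proof (rule assms(2))
    show "A \<subseteq> S" using that by auto
    show "card A \<noteq> 1"
    proof
      assume "card A = 1"
      then obtain a where "A = {a}" by (rule card_1_singletonE)
      with that show False by auto
    qed
  qed
  then have "(\<Sum>A\<in>Pow S. f A) = (\<Sum>A\<in>(\<lambda>a. {a}) ` S. f A)"
    using assms(1) by (intro sum.mono_neutral_right) auto
  also have "\<dots> = (\<Sum>a\<in>S. f {a})"
    by (simp add: sum.reindex)
  finally show ?thesis .
qed

lemma sum_delta_mult:
  fixes f :: "'a \<Rightarrow> 'b::semiring_0"
  assumes "finite S"
  shows "(\<Sum>x\<in>S. (if a = x then k else 0) * f x) = (if a \<in> S then k * f a else 0)"
proof -
  have "(\<Sum>x\<in>S. (if a = x then k else 0) * f x) = (\<Sum>x\<in>S. if a = x then k * f x else 0)"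
    by (intro sum.cong refl) simp
  then show ?thesis using assms by (simp add: sum.delta')
qed

section \<open>The Clifford module S\<close>

lemma sub_simps: "sub 0 = {}" "sub (Suc 0) = {1}" "sub 2 = {2}" "sub 3 = {1, 2}"
  by (auto simp: sub_def)

lemma theta_mat_explicit:
  "theta_mat 1 = mat_of_rows_list 4 [[0,1,0,0],[0,0,0,0],[0,0,0,1],[0,0,0,0]]"
  "theta_mat 2 = mat_of_rows_list 4 [[0,0,1,0],[0,0,0,-1],[0,0,0,0],[0,0,0,0]]"
  "thetabar_mat 1 = mat_of_rows_list 4 [[0,0,0,0],[1,0,0,0],[0,0,0,0],[0,0,1,0]]"
  "thetabar_mat 2 = mat_of_rows_list 4 [[0,0,0,0],[0,0,0,0],[1,0,0,0],[0,-1,0,0]]"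
  by (rule eq_mat_4I; simp add: theta_mat_def thetabar_mat_def all_less_4 sub_simps insert_Diff_if
      doubleton_eq_iff Collect_conv_if conj_disj_distribR Collect_disj_eq)+

text \<open>The simplifier rewrites the numeral \<open>1 :: nat\<close> to \<open>Suc 0\<close>, hence the second copies.\<close>

lemmas theta_mat_simps = theta_mat_explicit theta_mat_explicit[unfolded One_nat_def]

lemma e_mat_explicit:
  "e_mat 1 = mat_of_rows_list 4 [[0,1,0,0],[1,0,0,0],[0,0,0,1],[0,0,1,0]]"
  "e_mat 2 = mat_of_rows_list 4 [[0,-\<i>,0,0],[\<i>,0,0,0],[0,0,0,-\<i>],[0,0,\<i>,0]]"
  "e_mat 3 = mat_of_rows_list 4 [[0,0,1,0],[0,0,0,-1],[1,0,0,0],[0,-1,0,0]]"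
  "e_mat 4 = mat_of_rows_list 4 [[0,0,-\<i>,0],[0,0,0,\<i>],[\<i>,0,0,0],[0,-\<i>,0,0]]"
  by (rule eq_mat_4I; simp add: e_mat_def theta_mat_simps all_less_4)+

lemmas e_mat_simps = e_mat_explicit e_mat_explicit[unfolded One_nat_def]

lemma e_mat_square: "a \<in> {1..4} \<Longrightarrow> e_mat a * e_mat a = 1\<^sub>m 4"
  unfolding mem_1_to_4
  by (elim disjE; hypsubst; unfold e_mat_simps; rule eq_mat_4I) (simp_all add: entrywise_4)

lemma e_mat_anticommute:
  "a \<in> {1..4} \<Longrightarrow> b \<in> {1..4} \<Longrightarrow> a \<noteq> b \<Longrightarrow> e_mat b * e_mat a = - (e_mat a * e_mat b)"
  unfolding mem_1_to_4
  by (elim disjE; hypsubst; simp only: e_mat_simps; rule eq_mat_4I) (simp_all add: entrywise_4)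

lemma theta_mat_carrier: "theta_mat a \<in> carrier_mat 4 4" "thetabar_mat a \<in> carrier_mat 4 4"
  unfolding theta_mat_def thetabar_mat_def by simp_all

lemma e_mat_carrier [simp]: "e_mat a \<in> carrier_mat 4 4"
  by (simp add: e_mat_def theta_mat_carrier minus_carrier_mat)

lemma e_mat_dims [simp]: "dim_row (e_mat a) = 4" "dim_col (e_mat a) = 4"
  by (rule carrier_matD[OF e_mat_carrier])+

lemma eA_mat_empty: "eA_mat {} = 1\<^sub>m 4"
  by (simp add: eA_mat_def)

lemma eA_mat_singleton: "eA_mat {a} = e_mat a"
  by (simp add: eA_mat_def right_mult_one_mat[OF e_mat_carrier])

lemma eA_mat_pair: "a < b \<Longrightarrow> eA_mat {a, b} = e_mat a * e_mat b"
  by (simp add: eA_mat_def right_mult_one_mat[OF e_mat_carrier])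

lemma cl_sign_singletons: "cl_sign {a} {b} = (if b < a then -1 else 1)"
proof -
  have "{(x, y). x \<in> {a} \<and> y \<in> {b} \<and> y < x} = (if b < a then {(a, b)} else {})"
    by auto
  then show ?thesis by (simp add: cl_sign_def)
qed

lemma e_mat_mult_as_eA_mat:
  assumes "a \<in> {1..4}" "b \<in> {1..4}" "i < 4" "j < 4"
  shows "cl_sign {a} {b} * eA_mat (({a} - {b}) \<union> ({b} - {a})) $$ (i, j) = (e_mat a * e_mat b) $$ (i, j)"
proof (cases a b rule: linorder_cases)
  case less
  then have "({a} - {b}) \<union> ({b} - {a}) = {a, b}" by auto
  with less show ?thesis by (simp add: cl_sign_singletons eA_mat_pair)
next
  case equal
  with assms show ?thesis by (simp add: cl_sign_singletons eA_mat_empty e_mat_square)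
next
  case greater
  then have "({a} - {b}) \<union> ({b} - {a}) = {b, a}" by auto
  with greater have "eA_mat (({a} - {b}) \<union> ({b} - {a})) = e_mat b * e_mat a"
    by (simp add: eA_mat_pair)
  also have "\<dots> = - (e_mat a * e_mat b)"
    using assms greater by (intro e_mat_anticommute) auto
  finally show ?thesis
    using greater assms by (simp add: cl_sign_singletons)
qed

lemma gamma_singleton: "a \<in> {1..4} \<Longrightarrow> gamma v {a} = v a"
  by (simp add: gamma_def)

lemma gamma_non_singleton: "card A \<noteq> 1 \<Longrightarrow> gamma v A = 0"
  by (simp add: gamma_def)

lemma cz_apply: "cz A = (if {} = A then -1 else 0)"
  by (auto simp: cz_def cneg_def cone_def)

lemma rhoS_dims [simp]: "dim_row (rhoS x) = 4" "dim_col (rhoS x) = 4"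
  by (simp_all add: rhoS_def)

lemma rhoS_index:
  "i < 4 \<Longrightarrow> j < 4 \<Longrightarrow> rhoS x $$ (i, j) = (\<Sum>A\<in>Pow {1..4}. x A * eA_mat A $$ (i, j))"
  by (simp add: rhoS_def)

lemma rhoS_gamma_index:
  assumes "i < 4" "j < 4"
  shows "rhoS (gamma v) $$ (i, j) = (\<Sum>a\<in>{1..4}. v a * e_mat a $$ (i, j))"
proof -
  have "rhoS (gamma v) $$ (i, j) = (\<Sum>a\<in>{1..4}. gamma v {a} * eA_mat {a} $$ (i, j))"
    using assms by (simp add: rhoS_index sum_Pow_singletons gamma_non_singleton)
  also have "\<dots> = (\<Sum>a\<in>{1..4}. v a * e_mat a $$ (i, j))"
    by (intro sum.cong refl) (simp add: gamma_singleton eA_mat_singleton)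
  finally show ?thesis .
qed

lemma rhoS_cmul_index:
  assumes "i < 4" "j < 4"
  shows "rhoS (cmul x y) $$ (i, j) = (\<Sum>A\<in>Pow {1..4}. \<Sum>B\<in>Pow {1..4}.
    cl_sign A B * x A * y B * eA_mat ((A - B) \<union> (B - A)) $$ (i, j))"
proof -
  let ?P = "Pow {1..4::nat}"
  let ?t = "\<lambda>A B C. (if (A - B) \<union> (B - A) = C then cl_sign A B * x A * y B else 0) * eA_mat C $$ (i, j)"
  have "rhoS (cmul x y) $$ (i, j) = (\<Sum>C\<in>?P. \<Sum>A\<in>?P. \<Sum>B\<in>?P. ?t A B C)"
    unfolding rhoS_index[OF assms] cmul_def sum_distrib_right ..
  also have "\<dots> = (\<Sum>A\<in>?P. \<Sum>B\<in>?P. \<Sum>C\<in>?P. ?t A B C)"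
    by (subst sum.swap) (rule sum.cong[OF refl], rule sum.swap)
  also have "\<dots> = (\<Sum>A\<in>?P. \<Sum>B\<in>?P. cl_sign A B * x A * y B * eA_mat ((A - B) \<union> (B - A)) $$ (i, j))"
    by (intro sum.cong refl) (auto simp: sum_delta_mult)
  finally show ?thesis .
qed

lemma rhoS_cmul_gamma: "rhoS (cmul (gamma u) (gamma v)) = rhoS (gamma u) * rhoS (gamma v)"
proof (rule eq_mat_4I)
  show "\<forall>i<4. \<forall>j<4. rhoS (cmul (gamma u) (gamma v)) $$ (i, j) = (rhoS (gamma u) * rhoS (gamma v)) $$ (i, j)"
  proof (intro allI impI)
    fix i j :: nat
    assume ij: "i < 4" "j < 4"
    have "rhoS (cmul (gamma u) (gamma v)) $$ (i, j) = (\<Sum>a\<in>{1..4}. \<Sum>b\<in>{1..4}.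
        gamma u {a} * gamma v {b} * (cl_sign {a} {b} * eA_mat (({a} - {b}) \<union> ({b} - {a})) $$ (i, j)))"
      unfolding rhoS_cmul_index[OF ij]
      by (simp add: sum_Pow_singletons gamma_non_singleton mult_ac)
    also have "\<dots> = (\<Sum>a\<in>{1..4}. \<Sum>b\<in>{1..4}.
        u a * v b * (cl_sign {a} {b} * eA_mat (({a} - {b}) \<union> ({b} - {a})) $$ (i, j)))"
      by (intro sum.cong refl) (simp add: gamma_singleton)
    also have "\<dots> = (\<Sum>a\<in>{1..4}. \<Sum>b\<in>{1..4}. \<Sum>k<4. u a * e_mat a $$ (i, k) * (v b * e_mat b $$ (k, j)))"
      using ij by (intro sum.cong refl)
        (simp add: e_mat_mult_as_eA_mat index_mult_mat_4 sum_distrib_left ac_simps del: index_mult_mat)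
    also have "\<dots> = (\<Sum>k<4. (\<Sum>a\<in>{1..4}. u a * e_mat a $$ (i, k)) * (\<Sum>b\<in>{1..4}. v b * e_mat b $$ (k, j)))"
      by (simp add: sum_product sum.swap[where A = "{..<4}"])
    also have "\<dots> = (rhoS (gamma u) * rhoS (gamma v)) $$ (i, j)"
      using ij by (subst index_mult_mat_4) (auto simp: rhoS_gamma_index intro!: sum.cong)
    finally show "rhoS (cmul (gamma u) (gamma v)) $$ (i, j) = (rhoS (gamma u) * rhoS (gamma v)) $$ (i, j)" .
  qed
qed simp_all

lemma rhoS_cz: "rhoS cz = - 1\<^sub>m 4"
proof (rule eq_mat_4I)
  show "\<forall>i<4. \<forall>j<4. rhoS cz $$ (i, j) = (- 1\<^sub>m 4) $$ (i, j)"
    by (simp add: rhoS_index cz_apply sum_delta_mult eA_mat_empty)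
qed simp_all

lemma rhoS_cmul_cz: "rhoS (cmul cz x) = - rhoS x"
proof (rule eq_mat_4I)
  show "\<forall>i<4. \<forall>j<4. rhoS (cmul cz x) $$ (i, j) = (- rhoS x) $$ (i, j)"
  proof (intro allI impI)
    fix i j :: nat
    assume ij: "i < 4" "j < 4"
    have "rhoS (cmul cz x) $$ (i, j) = (\<Sum>A\<in>Pow {1..4}. cz A *
        (\<Sum>B\<in>Pow {1..4}. cl_sign A B * x B * eA_mat ((A - B) \<union> (B - A)) $$ (i, j)))"
      by (simp add: rhoS_cmul_index[OF ij] sum_distrib_left mult_ac)
    also have "\<dots> = (- rhoS x) $$ (i, j)"
      using ij by (simp add: cz_apply sum_delta_mult cl_sign_def rhoS_index sum_negf)
    finally show "rhoS (cmul cz x) $$ (i, j) = (- rhoS x) $$ (i, j)" .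
  qed
qed simp_all

definition spinor_gamma :: "(nat \<Rightarrow> complex) \<Rightarrow> complex mat" where
  "spinor_gamma v = mat_of_rows_list 4
     [[0, v 1 - \<i> * v 2, v 3 - \<i> * v 4, 0],
      [v 1 + \<i> * v 2, 0, 0, - v 3 + \<i> * v 4],
      [v 3 + \<i> * v 4, 0, 0, v 1 - \<i> * v 2],
      [0, - v 3 - \<i> * v 4, v 1 + \<i> * v 2, 0]]"

lemma rhoS_gamma: "rhoS (gamma v) = spinor_gamma v"
  by (rule eq_mat_4I)
    (simp_all add: spinor_gamma_def rhoS_gamma_index[unfolded sum_1_to_4] e_mat_simps all_less_4)

section \<open>The double cover and its generators\<close>

lemma cmul_cone_right:
  assumes "\<And>A. \<not> A \<subseteq> {1..4} \<Longrightarrow> x A = 0"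
  shows "cmul x cone = x"
proof
  fix C
  have inner: "(\<Sum>B\<in>Pow {1..4::nat}. if (A - B) \<union> (B - A) = C then cl_sign A B * x A * cone B else 0)
      = (if C = A then 1 else 0) * x A" for A
  proof -
    have "(\<Sum>B\<in>Pow {1..4::nat}. if (A - B) \<union> (B - A) = C then cl_sign A B * x A * cone B else 0)
        = (\<Sum>B\<in>Pow {1..4::nat}. if {} = B then (if C = A then 1 else 0) * x A else 0)"
      by (intro sum.cong refl) (auto simp: cone_def cl_sign_def)
    then show ?thesis by (simp add: sum.delta')
  qed
  have "cmul x cone C = (\<Sum>A\<in>Pow {1..4}. (if C = A then 1 else 0) * x A)"
    unfolding cmul_def inner ..
  also have "\<dots> = x C"
    using assms by (auto simp: sum_delta_mult)
  finally show "cmul x cone C = x C" .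
qed

lemma cmul_gamma:
  "cmul (gamma u) (gamma v) C = (\<Sum>a\<in>{1..4}. \<Sum>b\<in>{1..4}.
     if ({a} - {b}) \<union> ({b} - {a}) = C then cl_sign {a} {b} * u a * v b else 0)"
proof -
  have "cmul (gamma u) (gamma v) C = (\<Sum>a\<in>{1..4}. \<Sum>b\<in>{1..4}.
     if ({a} - {b}) \<union> ({b} - {a}) = C then cl_sign {a} {b} * gamma u {a} * gamma v {b} else 0)"
    unfolding cmul_def by (simp add: sum_Pow_singletons gamma_non_singleton cong: if_cong)
  also have "\<dots> = (\<Sum>a\<in>{1..4}. \<Sum>b\<in>{1..4}.
     if ({a} - {b}) \<union> ({b} - {a}) = C then cl_sign {a} {b} * u a * v b else 0)"
    by (intro sum.cong refl) (simp add: gamma_singleton)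
  finally show ?thesis .
qed

lemma gamma_in_Wt:
  assumes "gamma v \<in> Wgens m1 m2"
  shows "gamma v \<in> Wt m1 m2"
proof -
  have "cmul (gamma v) cone = gamma v"
    by (rule cmul_cone_right) (simp add: gamma_def)
  with Wt_mul[OF assms Wt_one] show ?thesis by simp
qed

lemma Wgens_alpha: "1 \<le> p \<Longrightarrow> p \<le> 2 * m1 \<Longrightarrow> gamma (alpha m1 p) \<in> Wgens m1 m2"
  unfolding Wgens_def by blast

lemma Wgens_beta: "1 \<le> q \<Longrightarrow> q \<le> 2 * m2 \<Longrightarrow> gamma (beta m2 q) \<in> Wgens m1 m2"
  unfolding Wgens_def by blast

definition plane_vec :: "nat \<Rightarrow> complex \<Rightarrow> complex \<Rightarrow> nat \<Rightarrow> complex" where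
  "plane_vec a s c = (\<lambda>j. if j = 2 * a - 1 then s else if j = 2 * a then - c else 0)"

lemma alpha_plane_vec:
  "alpha m p = plane_vec 1 (of_real (sin (real p * pi / real m))) (of_real (cos (real p * pi / real m)))"
  by (rule ext) (simp add: alpha_def plane_vec_def)

lemma beta_plane_vec:
  "beta m q = plane_vec 2 (of_real (sin (real q * pi / real m))) (of_real (cos (real q * pi / real m)))"
  by (rule ext) (simp add: beta_def plane_vec_def)

lemma alpha_beta_special:
  assumes "m > 0"
  shows "alpha m m = plane_vec 1 0 (-1)" "alpha m (2 * m) = plane_vec 1 0 1"
    and "beta m m = plane_vec 2 0 (-1)"
    and "alpha m 1 = plane_vec 1 (of_real (sin (pi / m))) (of_real (cos (pi / m)))"
    and "beta m 1 = plane_vec 2 (of_real (sin (pi / m))) (of_real (cos (pi / m)))"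
  using assms by (simp_all add: alpha_plane_vec beta_plane_vec)

lemma cz_in_Wt:
  assumes "m1 > 0"
  shows "cz \<in> Wt m1 m2"
proof -
  have "cmul (gamma (alpha m1 m1)) (gamma (alpha m1 (2 * m1))) \<in> Wt m1 m2"
    using assms by (intro Wt_mul gamma_in_Wt Wgens_alpha) auto
  moreover have "cmul (gamma (plane_vec 1 0 (-1))) (gamma (plane_vec 1 0 1)) = cz"
    by (rule ext, unfold cmul_gamma sum_1_to_4)
      (simp add: plane_vec_def cl_sign_singletons cz_apply cong: if_cong)
  ultimately show ?thesis
    by (simp add: alpha_beta_special[OF assms])
qed

lemma zeta_cos_sin: "zeta m = of_real (cos (pi / m)) + \<i> * of_real (sin (pi / m))"
  by (simp add: zeta_def complex_eq_iff)

lemma inverse_zeta_cos_sin: "inverse (zeta m) = of_real (cos (pi / m)) - \<i> * of_real (sin (pi / m))"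
  by (simp add: zeta_def complex_eq_iff)

lemma sin_pi_div_nonzero: "m \<ge> 2 \<Longrightarrow> sin (pi / real m) \<noteq> 0"
  by (intro order.strict_implies_not_eq[symmetric] sin_gt_zero) (auto simp: divide_less_eq)

lemma rhoS_rotation_plane_1:
  "rhoS (cmul cz (cmul (gamma (plane_vec 1 0 (-1))) (gamma (plane_vec 1 s c)))) =
   mat_of_rows_list 4 [[c + \<i> * s, 0, 0, 0], [0, c - \<i> * s, 0, 0], [0, 0, c + \<i> * s, 0], [0, 0, 0, c - \<i> * s]]"
  unfolding rhoS_cmul_cz rhoS_cmul_gamma rhoS_gamma
  by (rule eq_mat_4I) (simp_all add: spinor_gamma_def plane_vec_def entrywise_4 algebra_simps)

lemma rhoS_rotation_plane_2:
  "rhoS (cmul cz (cmul (gamma (plane_vec 2 0 (-1))) (gamma (plane_vec 2 s c)))) =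
   mat_of_rows_list 4 [[c + \<i> * s, 0, 0, 0], [0, c + \<i> * s, 0, 0], [0, 0, c - \<i> * s, 0], [0, 0, 0, c - \<i> * s]]"
  unfolding rhoS_cmul_cz rhoS_cmul_gamma rhoS_gamma
  by (rule eq_mat_4I) (simp_all add: spinor_gamma_def plane_vec_def entrywise_4 algebra_simps)

lemma rhoS_tr1:
  assumes "m > 0"
  shows "rhoS (tr1 m) = U_r1 m"
  unfolding tr1_def alpha_beta_special[OF assms] rhoS_rotation_plane_1 U_r1_def inverse_zeta_cos_sin
  unfolding zeta_cos_sin ..

lemma rhoS_tr2:
  assumes "m > 0"
  shows "rhoS (tr2 m) = U_r2 m"
  unfolding tr2_def alpha_beta_special[OF assms] rhoS_rotation_plane_2 U_r2_def inverse_zeta_cos_sin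
  unfolding zeta_cos_sin ..

section \<open>Irreducibility\<close>

definition subspace_C4 :: "complex vec set \<Rightarrow> bool" where
  "subspace_C4 V \<longleftrightarrow> V \<subseteq> carrier_vec 4 \<and> 0\<^sub>v 4 \<in> V
     \<and> (\<forall>v\<in>V. \<forall>w\<in>V. v + w \<in> V) \<and> (\<forall>c. \<forall>v\<in>V. c \<cdot>\<^sub>v v \<in> V)"

definition invariant_under :: "complex mat \<Rightarrow> complex vec set \<Rightarrow> bool" where
  "invariant_under M V \<longleftrightarrow> (\<forall>v\<in>V. M *\<^sub>v v \<in> V)"

lemma irreducible_on_iff:
  "irreducible_on G \<longleftrightarrow>
     (\<forall>V. subspace_C4 V \<and> (\<forall>M\<in>G. invariant_under M V) \<longrightarrow> V = {0\<^sub>v 4} \<or> V = carrier_vec 4)"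
  by (auto simp: irreducible_on_def subspace_C4_def invariant_under_def)

lemma invariant_under_lincomb:
  assumes V: "subspace_C4 V" and M: "M \<in> carrier_mat 4 4" and N: "N \<in> carrier_mat 4 4"
    and "invariant_under M V" "invariant_under N V"
  shows "invariant_under (x \<cdot>\<^sub>m M + y \<cdot>\<^sub>m N) V"
  unfolding invariant_under_def
proof
  fix v assume "v \<in> V"
  then have v: "v \<in> carrier_vec 4" using V by (auto simp: subspace_C4_def)
  have "(x \<cdot>\<^sub>m M) *\<^sub>v v = x \<cdot>\<^sub>v (M *\<^sub>v v)" "(y \<cdot>\<^sub>m N) *\<^sub>v v = y \<cdot>\<^sub>v (N *\<^sub>v v)"
    using M N v by (auto intro!: eq_vecI)
  then have "(x \<cdot>\<^sub>m M + y \<cdot>\<^sub>m N) *\<^sub>v v = x \<cdot>\<^sub>v (M *\<^sub>v v) + y \<cdot>\<^sub>v (N *\<^sub>v v)"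
    using M N v by (simp add: add_mult_distrib_mat_vec[of _ 4 4])
  then show "(x \<cdot>\<^sub>m M + y \<cdot>\<^sub>m N) *\<^sub>v v \<in> V"
    using assms \<open>v \<in> V\<close> by (simp add: subspace_C4_def invariant_under_def)
qed

lemma theta_mats_mult_vec4:
  "theta_mat 1 *\<^sub>v vec4 a b c d = vec4 b 0 d 0"
  "thetabar_mat 1 *\<^sub>v vec4 a b c d = vec4 0 a 0 c"
  "theta_mat 2 *\<^sub>v vec4 a b c d = vec4 c (- d) 0 0"
  "thetabar_mat 2 *\<^sub>v vec4 a b c d = vec4 0 0 a (- b)"
  by (simp_all add: theta_mat_simps mat_of_rows_list_mult_vec4)

lemma spinor_subspace_trivial:
  assumes V: "subspace_C4 V"
    and inv: "invariant_under (theta_mat 1) V" "invariant_under (thetabar_mat 1) V"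
      "invariant_under (theta_mat 2) V" "invariant_under (thetabar_mat 2) V"
  shows "V = {0\<^sub>v 4} \<or> V = carrier_vec 4"
proof (cases "V \<subseteq> {0\<^sub>v 4}")
  case True
  with V show ?thesis by (auto simp: subspace_C4_def)
next
  case False
  have sub: "V \<subseteq> carrier_vec 4" using V by (simp add: subspace_C4_def)
  have lin: "vec4 (k * a + l * a') (k * b + l * b') (k * c + l * c') (k * d + l * d') \<in> V"
    if "vec4 a b c d \<in> V" "vec4 a' b' c' d' \<in> V" for k l a b c d a' b' c' d'
    using V that by (auto simp: subspace_C4_def simp flip: vec4_smult vec4_add)
  have lower1: "vec4 b 0 d 0 \<in> V" and raise1: "vec4 0 a 0 c \<in> V"
    and lower2: "vec4 c (- d) 0 0 \<in> V" and raise2: "vec4 0 0 a (- b) \<in> V"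
    if "vec4 a b c d \<in> V" for a b c d
    using inv that by (metis invariant_under_def theta_mats_mult_vec4)+
  from False obtain x where x: "x \<in> V" "x \<noteq> 0\<^sub>v 4" by blast
  with sub have x_eq: "x = vec4 (x $ 0) (x $ 1) (x $ 2) (x $ 3)" by (intro vec4_eta) auto
  define a b c d where "a = x $ 0" and "b = x $ 1" and "c = x $ 2" and "d = x $ 3"
  have v: "vec4 a b c d \<in> V" using x x_eq by (simp add: a_def b_def c_def d_def)
  have nz: "a \<noteq> 0 \<or> b \<noteq> 0 \<or> c \<noteq> 0 \<or> d \<noteq> 0"
    using x x_eq by (auto simp: a_def b_def c_def d_def vec4_zero)
  have "\<exists>t. t \<noteq> 0 \<and> vec4 t 0 0 0 \<in> V"
  proof -
    have ab: "vec4 a b 0 0 \<in> V" using lower2[OF raise2[OF v]] by simp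
    have "vec4 (- d) 0 0 0 \<in> V" using lower1[OF lower2[OF v]] by simp
    moreover have "vec4 c 0 0 0 \<in> V" using lower1[OF raise1[OF lower2[OF v]]] by simp
    moreover have "vec4 b 0 0 0 \<in> V" using lower1[OF ab] by simp
    moreover have "vec4 a 0 0 0 \<in> V" using lower1[OF raise1[OF ab]] by simp
    ultimately show ?thesis using nz by (metis neg_equal_0_iff_equal)
  qed
  then obtain t where "t \<noteq> 0" "vec4 t 0 0 0 \<in> V" by blast
  then have e0: "vec4 1 0 0 0 \<in> V" using lin[of t 0 0 0 t 0 0 0 "1 / t" 0] by simp
  have e1: "vec4 0 1 0 0 \<in> V" using raise1[OF e0] by simp
  have e2: "vec4 0 0 1 0 \<in> V" using raise2[OF e0] by simp
  have e3: "vec4 0 0 0 1 \<in> V" using raise1[OF e2] by simp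
  have "w \<in> V" if "w \<in> carrier_vec 4" for w
    using lin[where k = 1 and l = 1, OF lin[where k = "w $ 0" and l = "w $ 1", OF e0 e1]
        lin[where k = "w $ 2" and l = "w $ 3", OF e2 e3]] vec4_eta[OF that] by simp
  then have "carrier_vec 4 \<subseteq> V" by blast
  with sub show ?thesis by blast
qed

lemma theta_mats_lincomb:
  fixes s c :: complex
  assumes "s \<noteq> 0"
  shows "theta_mat 1 = (1 / (2 * s)) \<cdot>\<^sub>m spinor_gamma (plane_vec 1 s c)
           + ((c + \<i> * s) / (2 * s)) \<cdot>\<^sub>m spinor_gamma (plane_vec 1 0 (-1))"
    and "thetabar_mat 1 = (1 / (2 * s)) \<cdot>\<^sub>m spinor_gamma (plane_vec 1 s c)
           + ((c - \<i> * s) / (2 * s)) \<cdot>\<^sub>m spinor_gamma (plane_vec 1 0 (-1))"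
    and "theta_mat 2 = (1 / (2 * s)) \<cdot>\<^sub>m spinor_gamma (plane_vec 2 s c)
           + ((c + \<i> * s) / (2 * s)) \<cdot>\<^sub>m spinor_gamma (plane_vec 2 0 (-1))"
    and "thetabar_mat 2 = (1 / (2 * s)) \<cdot>\<^sub>m spinor_gamma (plane_vec 2 s c)
           + ((c - \<i> * s) / (2 * s)) \<cdot>\<^sub>m spinor_gamma (plane_vec 2 0 (-1))"
  unfolding theta_mat_explicit
  by (rule eq_mat_4I; simp add: assms spinor_gamma_def plane_vec_def all_less_4 field_simps)+

lemma irreducible_rhoS_Wt:
  assumes "m1 \<ge> 2" and "m2 \<ge> 2"
  shows "irreducible_on (rhoS ` Wt m1 m2)"
  unfolding irreducible_on_iff
proof (intro allI impI, elim conjE)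
  fix V
  assume V: "subspace_C4 V" and inv: "\<forall>M\<in>rhoS ` Wt m1 m2. invariant_under M V"
  have gen: "invariant_under (spinor_gamma v) V" if "gamma v \<in> Wgens m1 m2" for v
    using bspec[OF inv imageI[OF gamma_in_Wt[OF that]]] by (simp add: rhoS_gamma)
  have lincomb: "invariant_under (x \<cdot>\<^sub>m spinor_gamma u + y \<cdot>\<^sub>m spinor_gamma w) V"
    if "gamma u \<in> Wgens m1 m2" "gamma w \<in> Wgens m1 m2" for x y u w
    using invariant_under_lincomb[OF V _ _ gen[OF that(1)] gen[OF that(2)]] by (simp add: spinor_gamma_def)
  define s1 c1 s2 c2 where "s1 = complex_of_real (sin (pi / m1))" and "c1 = complex_of_real (cos (pi / m1))"
    and "s2 = complex_of_real (sin (pi / m2))" and "c2 = complex_of_real (cos (pi / m2))"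
  have "s1 \<noteq> 0" "s2 \<noteq> 0"
    using sin_pi_div_nonzero assms by (simp_all add: s1_def s2_def)
  have "m1 > 0" "m2 > 0" using assms by simp_all
  have gens: "gamma (plane_vec 1 s1 c1) \<in> Wgens m1 m2" "gamma (plane_vec 1 0 (-1)) \<in> Wgens m1 m2"
    "gamma (plane_vec 2 s2 c2) \<in> Wgens m1 m2" "gamma (plane_vec 2 0 (-1)) \<in> Wgens m1 m2"
    unfolding s1_def c1_def s2_def c2_def
      alpha_beta_special(1,4)[OF \<open>m1 > 0\<close>, symmetric]
      alpha_beta_special(3,5)[OF \<open>m2 > 0\<close>, symmetric]
    using assms by (intro Wgens_alpha Wgens_beta; simp)+
  show "V = {0\<^sub>v 4} \<or> V = carrier_vec 4"
  proof (rule spinor_subspace_trivial[OF V])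
    show "invariant_under (theta_mat 1) V" "invariant_under (thetabar_mat 1) V"
      unfolding theta_mats_lincomb[OF \<open>s1 \<noteq> 0\<close>, of c1] by (intro lincomb gens)+
    show "invariant_under (theta_mat 2) V" "invariant_under (thetabar_mat 2) V"
      unfolding theta_mats_lincomb[OF \<open>s2 \<noteq> 0\<close>, of c2] by (intro lincomb gens)+
  qed
qed

section \<open>The intertwiner with U(1,1)\<close>

text \<open>The basis u_1 = 1, u_2 = i thetabar_1, u_3 = i thetabar_2, u_4 = - thetabar_1 thetabar_2
  of S realises U(1,1).\<close>

definition spinor_to_U :: "complex mat" where
  "spinor_to_U = mat_of_rows_list 4 [[1, 0, 0, 0], [0, - \<i>, 0, 0], [0, 0, - \<i>, 0], [0, 0, 0, -1]]"

lemma spinor_to_U_carrier: "spinor_to_U \<in> carrier_mat 4 4"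
  by (simp add: spinor_to_U_def)

lemma invertible_spinor_to_U: "invertible_mat spinor_to_U"
proof -
  let ?Q = "mat_of_rows_list 4 [[1, 0, 0, 0], [0, \<i>, 0, 0], [0, 0, \<i>, 0], [0, 0, 0, -1]] :: complex mat"
  have "spinor_to_U * ?Q = 1\<^sub>m 4" "?Q * spinor_to_U = 1\<^sub>m 4"
    by (rule eq_mat_4I; simp add: spinor_to_U_def entrywise_4)+
  then show ?thesis
    unfolding invertible_mat_def inverts_mat_def
    by (intro conjI exI[of _ ?Q]) (simp_all add: spinor_to_U_def eval_nat_numeral)
qed

lemma spinor_to_U_intertwines:
  assumes "m1 > 0" and "m2 > 0"
  shows "spinor_to_U * rhoS (tf1 m1) = U_f1 * spinor_to_U"
    and "spinor_to_U * rhoS (tf2 m2) = U_f2 * spinor_to_U"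
    and "spinor_to_U * U_r1 m1 = U_r1 m1 * spinor_to_U"
    and "spinor_to_U * U_r2 m2 = U_r2 m2 * spinor_to_U"
    and "spinor_to_U * U_z = U_z * spinor_to_U"
  unfolding tf1_def tf2_def alpha_beta_special[OF assms(1)] alpha_beta_special[OF assms(2)] rhoS_gamma
    spinor_gamma_def spinor_to_U_def U_f1_def U_f2_def U_r1_def U_r2_def U_z_def
  by (rule eq_mat_4I; simp add: plane_vec_def entrywise_4)+

theorem proposition2p2:
  fixes m1 m2 :: nat
  assumes "m1 \<ge> 2" and "m2 \<ge> 2"
  shows "cz \<in> Wt m1 m2
    \<and> rhoS cz = - 1\<^sub>m 4
    \<and> irreducible_on (rhoS ` Wt m1 m2)
    \<and> (\<exists>P \<in> carrier_mat 4 4. invertible_mat P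
         \<and> P * rhoS (tf1 m1) = U_f1 * P
         \<and> P * rhoS (tf2 m2) = U_f2 * P
         \<and> P * rhoS (tr1 m1) = U_r1 m1 * P
         \<and> P * rhoS (tr2 m2) = U_r2 m2 * P
         \<and> P * rhoS cz = U_z * P)"
proof -
  have m: "m1 > 0" "m2 > 0" using assms by simp_all
  have "rhoS (tr1 m1) = U_r1 m1" "rhoS (tr2 m2) = U_r2 m2" "rhoS cz = U_z"
    using rhoS_tr1[OF m(1)] rhoS_tr2[OF m(2)] by (simp_all add: rhoS_cz U_z_def)
  then show ?thesis
    using cz_in_Wt[OF m(1)] rhoS_cz irreducible_rhoS_Wt[OF assms] spinor_to_U_carrier
      invertible_spinor_to_U spinor_to_U_intertwines[OF m]
    by (intro conjI bexI[of _ spinor_to_U]) simp_all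
qed

end
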